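(* Let $G=(V,w,m)$ be a locally finite measured weighted graph, let $x_0\neq y_0\in V$ with $d(x_0,y_0)<\infty$, and let $\varepsilon>0$ be such that $d(x_0,y_0)\,\kappa(x_0,y_0)\le\varepsilon$. Then there exists an optimal transport plan $\rho:B_1(x_0)\times B_1(y_0)\to[0,\infty)$ for the pair $(x_0,y_0)$ such that $$\sum_{\substack{x\in B_1(x_0),\ y\in B_1(y_0)\\ d(x,y)>d(x_0,y_0)}}\rho(x,y)\ \ge\ \frac{q_{\min}-\varepsilon}{2},$$ where $q_{\min}:=\inf_{x\sim y}q(x,y)$.
   Context: A measured weighted graph $G=(V,w,m)$ consists of a countable set $V$, a symmetric $w:V\times V\to[0,\infty)$ vanishing on the diagonal, and $m:V\to(0,\infty)$; $x\sim y$ iff $w(x,y)>0$; locally finite means each vertex has finitely many neighbours. $q(x,y):=w(x,y)/m(x)$, $\Delta f(x):=\sum_y q(x,y)(f(y)-f(x))$. $d$ is the combinatorial graph distance, $B_1(x)=\{z:d(x,z)\le1\}$, $S_1(x)=\{z:d(x,z)=1\}$. For $x\ne y$, $\nabla_{xy}f:=(f(x)-f(y))/d(x,y)$, $\|\nabla f\|_\infty:=\sup_{x\sim y}\nabla_{xy}f$, and the Ollivier curvature is $\kappa(x,y):=\inf\{\nabla_{xy}\Delta f: \nabla_{yx}f=1,\ \|\nabla f\|_\infty=1\}$. A transport plan for $(x_0,y_0)$ is any $\rho:B_1(x_0)\times B_1(y_0)\to[0,\infty)$ with $\sum_{y\in B_1(y_0)}\rho(x,y)=q(x_0,x)$ for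 all $x\in S_1(x_0)$ and $\sum_{x\in B_1(x_0)}\rho(x,y)=q(y_0,y)$ for all $y\in S_1(y_0)$ (no condition is imposed at $x_0$ or $y_0$, and $\rho$ need not be a probability measure). It is known that $\kappa(x_0,y_0)=\sup_\rho\sum_{x,y}\rho(x,y)\big[1-\frac{d(x,y)}{d(x_0,y_0)}\big]$ over all transport plans; a transport plan attaining this supremum is called optimal. *)

theory Defs
  imports "HOL-Analysis.Analysis" "HOL-Library.Extended_Nat" "HOL-Library.Extended_Real"
begin

text \<open>Measured weighted graph on the countable vertex type 'a (V = UNIV).\<close>

definition measured_graph :: "('a \<Rightarrow> 'a \<Rightarrow> real) \<Rightarrow> ('a \<Rightarrow> real) \<Rightarrow> bool" where
  "measured_graph w m \<longleftrightarrow> (\<forall>x y. w x y = w y x) \<and> (\<forall>x y. 0 \<le> w x y) \<and>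
     (\<forall>x. w x x = 0) \<and> (\<forall>x. 0 < m x)"

definition adj :: "('a \<Rightarrow> 'a \<Rightarrow> real) \<Rightarrow> 'a \<Rightarrow> 'a \<Rightarrow> bool" where
  "adj w x y \<longleftrightarrow> 0 < w x y"

definition locally_finite :: "('a \<Rightarrow> 'a \<Rightarrow> real) \<Rightarrow> bool" where
  "locally_finite w \<longleftrightarrow> (\<forall>x. finite {y. adj w x y})"

definition qw :: "('a \<Rightarrow> 'a \<Rightarrow> real) \<Rightarrow> ('a \<Rightarrow> real) \<Rightarrow> 'a \<Rightarrow> 'a \<Rightarrow> real" where
  "qw w m x y = w x y / m x"

definition laplacian :: "('a \<Rightarrow> 'a \<Rightarrow> real) \<Rightarrow> ('a \<Rightarrow> real) \<Rightarrow> ('a \<Rightarrow> real) \<Rightarrow> 'a \<Rightarrow> real" where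
  "laplacian w m f x = (\<Sum>y\<in>{y. adj w x y}. qw w m x y * (f y - f x))"

definition gdist :: "('a \<Rightarrow> 'a \<Rightarrow> real) \<Rightarrow> 'a \<Rightarrow> 'a \<Rightarrow> enat" where
  "gdist w x y = (INF n\<in>{n. (adj w ^^ n) x y}. enat n)"

definition ball1 :: "('a \<Rightarrow> 'a \<Rightarrow> real) \<Rightarrow> 'a \<Rightarrow> 'a set" where
  "ball1 w x = {z. gdist w x z \<le> 1}"

definition sphere1 :: "('a \<Rightarrow> 'a \<Rightarrow> real) \<Rightarrow> 'a \<Rightarrow> 'a set" where
  "sphere1 w x = {z. gdist w x z = 1}"

text \<open>Gradient, only used for pairs at finite distance.\<close>
definition grad :: "('a \<Rightarrow> 'a \<Rightarrow> real) \<Rightarrow> ('a \<Rightarrow> real) \<Rightarrow> 'a \<Rightarrow> 'a \<Rightarrow> real" where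
  "grad w f x y = (f x - f y) / real (the_enat (gdist w x y))"

definition grad_sup :: "('a \<Rightarrow> 'a \<Rightarrow> real) \<Rightarrow> ('a \<Rightarrow> real) \<Rightarrow> ereal" where
  "grad_sup w f = (SUP p\<in>{(x, y). adj w x y}. ereal (grad w f (fst p) (snd p)))"

definition ollivier :: "('a \<Rightarrow> 'a \<Rightarrow> real) \<Rightarrow> ('a \<Rightarrow> real) \<Rightarrow> 'a \<Rightarrow> 'a \<Rightarrow> ereal" where
  "ollivier w m x0 y0 = Inf {ereal (grad w (laplacian w m f) x0 y0) | f.
      grad w f y0 x0 = 1 \<and> grad_sup w f = 1}"

definition transport_plan ::
  "('a \<Rightarrow> 'a \<Rightarrow> real) \<Rightarrow> ('a \<Rightarrow> real) \<Rightarrow> 'a \<Rightarrow> 'a \<Rightarrow> ('a \<Rightarrow> 'a \<Rightarrow> real) \<Rightarrow> bool" where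
  "transport_plan w m x0 y0 \<rho> \<longleftrightarrow>
     (\<forall>x\<in>ball1 w x0. \<forall>y\<in>ball1 w y0. 0 \<le> \<rho> x y) \<and>
     (\<forall>x\<in>sphere1 w x0. (\<Sum>y\<in>ball1 w y0. \<rho> x y) = qw w m x0 x) \<and>
     (\<forall>y\<in>sphere1 w y0. (\<Sum>x\<in>ball1 w x0. \<rho> x y) = qw w m y0 y)"

definition plan_value :: "('a \<Rightarrow> 'a \<Rightarrow> real) \<Rightarrow> 'a \<Rightarrow> 'a \<Rightarrow> ('a \<Rightarrow> 'a \<Rightarrow> real) \<Rightarrow> real" where
  "plan_value w x0 y0 \<rho> = (\<Sum>p\<in>ball1 w x0 \<times> ball1 w y0.
      \<rho> (fst p) (snd p) * (1 - real (the_enat (gdist w (fst p) (snd p)))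
                                / real (the_enat (gdist w x0 y0))))"

definition optimal_plan ::
  "('a \<Rightarrow> 'a \<Rightarrow> real) \<Rightarrow> ('a \<Rightarrow> real) \<Rightarrow> 'a \<Rightarrow> 'a \<Rightarrow> ('a \<Rightarrow> 'a \<Rightarrow> real) \<Rightarrow> bool" where
  "optimal_plan w m x0 y0 \<rho> \<longleftrightarrow> transport_plan w m x0 y0 \<rho> \<and>
     (\<forall>\<rho>'. transport_plan w m x0 y0 \<rho>' \<longrightarrow> plan_value w x0 y0 \<rho>' \<le> plan_value w x0 y0 \<rho>)"

definition qmin :: "('a \<Rightarrow> 'a \<Rightarrow> real) \<Rightarrow> ('a \<Rightarrow> real) \<Rightarrow> real" where
  "qmin w m = Inf {qw w m x y | x y. adj w x y}"

end

theory Submission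
  imports Defs
begin

text \<open>Let x1 be a neighbour of x0 on a geodesic to y0. Rerouting an optimal plan so that x1
  ships its whole mass q(x0, x1) to y0, while x0 takes over what x1 delivered to the sphere around
  y0, does not lower its value, by the triangle inequality. All pairs in B1(x0) \<times> B1(y0) are at
  distance at most d(x0, y0) + 2, so d(x0, y0) times the value of the rerouted plan is at least
  q(x0, x1) \<ge> q_min minus twice its mass on pairs farther apart than x0 and y0. Pairing a plan
  with a 1-Lipschitz test function shows that its value is at most \<kappa>(x0, y0) (weak duality),
  and d(x0, y0) \<kappa>(x0, y0) \<le> \<epsilon> gives the claim. Optimal plans exist by compactness.\<close>

lemma adj_sym: "measured_graph w m \<Longrightarrow> adj w x y \<longleftrightarrow> adj w y x"
  by (simp add: measured_graph_def adj_def)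

lemma adj_irrefl: "measured_graph w m \<Longrightarrow> \<not> adj w x x"
  by (simp add: measured_graph_def adj_def)

lemma qw_nonneg: "measured_graph w m \<Longrightarrow> 0 \<le> qw w m x y"
  by (simp add: measured_graph_def qw_def less_imp_le)

lemma qmin_le_qw: "measured_graph w m \<Longrightarrow> adj w x y \<Longrightarrow> qmin w m \<le> qw w m x y"
  unfolding qmin_def by (rule cInf_lower) (auto intro: bdd_belowI[of _ 0] qw_nonneg)

lemma relpowp_symp: "symp R \<Longrightarrow> (R ^^ n) x y \<Longrightarrow> (R ^^ n) y x"
proof (induction n arbitrary: y)
  case (Suc n)
  from Suc.prems(2) obtain z where "(R ^^ n) x z" "R z y" by (rule relpowp_Suc_E)
  with Suc show ?case by (meson relpowp_Suc_I2 sympD)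
qed simp

lemma gdist_le_enat: "(adj w ^^ n) x y \<Longrightarrow> gdist w x y \<le> enat n"
  unfolding gdist_def by (rule INF_lower) simp

lemma gdist_enatD: assumes "gdist w x y = enat n" shows "(adj w ^^ n) x y"
proof -
  have "\<exists>n. (adj w ^^ n) x y"
  proof (rule ccontr)
    assume "\<nexists>n. (adj w ^^ n) x y"
    then have "gdist w x y = \<infinity>" by (simp add: gdist_def top_enat_def)
    with assms show False by simp
  qed
  define l where "l = (LEAST n. (adj w ^^ n) x y)"
  have l: "(adj w ^^ l) x y" unfolding l_def using \<open>\<exists>n. (adj w ^^ n) x y\<close> by (rule LeastI_ex)
  have "gdist w x y = enat l"
  proof (rule antisym)
    show "gdist w x y \<le> enat l" using l by (rule gdist_le_enat)
    show "enat l \<le> gdist w x y" unfolding gdist_def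
      by (rule INF_greatest) (auto simp: l_def intro: Least_le)
  qed
  with assms l show ?thesis by simp
qed

lemma gdist_sym: "measured_graph w m \<Longrightarrow> gdist w x y = gdist w y x"
  unfolding gdist_def
  by (metis (no_types, lifting) adj_sym relpowp_symp sympI)

lemma gdist_self: "gdist w x x = 0"
  using gdist_le_enat[where n = 0 and x = x and y = x] by (simp add: zero_enat_def[symmetric])

lemma gdist_eq_0_iff: "gdist w x y = 0 \<longleftrightarrow> x = y"
  using gdist_enatD[of w x y 0] by (auto simp: zero_enat_def gdist_self)

lemma gdist_triangle:
  "gdist w x y = enat a \<Longrightarrow> gdist w y z = enat b \<Longrightarrow> gdist w x z \<le> enat (a + b)"
  by (meson gdist_enatD gdist_le_enat relpowp_trans)

lemma gdist_eq_1_iff: assumes "measured_graph w m" shows "gdist w x y = 1 \<longleftrightarrow> adj w x y"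
proof
  assume "gdist w x y = 1"
  then show "adj w x y" by (metis gdist_enatD one_enat_def relpowp_1)
next
  assume "adj w x y"
  then have "gdist w x y \<le> 1" "x \<noteq> y"
    using gdist_le_enat[where n = 1 and x = x and y = y] adj_irrefl[OF assms]
    by (auto simp: one_enat_def)
  then show "gdist w x y = 1"
    using gdist_eq_0_iff[of w x y] by (cases "gdist w x y") (auto simp: one_enat_def zero_enat_def)
qed

lemma sphere1_eq: "measured_graph w m \<Longrightarrow> sphere1 w x = {y. adj w x y}"
  by (simp add: sphere1_def gdist_eq_1_iff)

lemma ball1_eq_insert_sphere1: "ball1 w x = insert x (sphere1 w x)"
proof -
  have "e \<le> 1 \<longleftrightarrow> e = 0 \<or> e = (1::enat)" for e
    by (cases e) (auto simp: one_enat_def zero_enat_def)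
  then show ?thesis
    unfolding ball1_def sphere1_def using gdist_eq_0_iff[of w x] by auto
qed

lemma self_notin_sphere1 [simp]: "x \<notin> sphere1 w x"
  by (simp add: sphere1_def gdist_self)

lemma finite_sphere1: "measured_graph w m \<Longrightarrow> locally_finite w \<Longrightarrow> finite (sphere1 w x)"
  by (simp add: sphere1_eq locally_finite_def)

lemma finite_ball1: "measured_graph w m \<Longrightarrow> locally_finite w \<Longrightarrow> finite (ball1 w x)"
  by (simp add: ball1_eq_insert_sphere1 finite_sphere1)

lemma gdist_ball1_ball1:
  assumes "measured_graph w m" "gdist w x0 y0 = enat d0"
    and "x \<in> ball1 w x0" "y \<in> ball1 w y0"
  shows "\<exists>n. gdist w x y = enat n \<and> n \<le> d0 + 2"
proof -
  have le1: "e \<le> 1 \<Longrightarrow> \<exists>a\<le>1. e = enat a" for e :: enat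
    by (cases e) (auto simp: one_enat_def)
  obtain a where a: "gdist w x x0 = enat a" "a \<le> 1"
    using assms(3) le1 gdist_sym[OF assms(1), of x0 x] unfolding ball1_def by force
  obtain b where b: "gdist w y0 y = enat b" "b \<le> 1"
    using assms(4) le1 unfolding ball1_def by force
  obtain c where c: "gdist w x y0 = enat c" "c \<le> a + d0"
    using gdist_triangle[OF a(1) assms(2)] by (cases "gdist w x y0") auto
  show ?thesis
    using gdist_triangle[OF c(1) b(1)] a(2) b(2) c(2) by (cases "gdist w x y") auto
qed

lemma exists_geodesic_neighbour:
  assumes "gdist w x0 y0 = enat d0" "0 < d0"
  obtains x1 where "adj w x0 x1" "gdist w x1 y0 \<le> enat (d0 - 1)"
proof -
  have "(adj w ^^ Suc (d0 - 1)) x0 y0" using gdist_enatD[OF assms(1)] assms(2) by simp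
  then obtain x1 where "adj w x0 x1" "(adj w ^^ (d0 - 1)) x1 y0" by (rule relpowp_Suc_E2)
  then show ?thesis using that gdist_le_enat by metis
qed

lemma grad_sup_le_1_adj:
  assumes "measured_graph w m" "grad_sup w f \<le> 1" "adj w u v"
  shows "f u - f v \<le> 1"
proof -
  have "ereal (grad w f u v) \<le> grad_sup w f"
    unfolding grad_sup_def using assms(3) by (intro SUP_upper2[of "(u, v)"]) auto
  from order_trans[OF this assms(2)] have "grad w f u v \<le> 1" by (simp add: one_ereal_def)
  then show ?thesis
    using gdist_eq_1_iff[OF assms(1), of u v] assms(3) by (simp add: grad_def one_enat_def)
qed

lemma grad_sup_le_1_gdist:
  assumes mg: "measured_graph w m" and lip: "grad_sup w f \<le> 1" and "gdist w x y = enat n"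
  shows "f y - f x \<le> real n"
proof -
  have "(adj w ^^ n) x y \<Longrightarrow> f y - f x \<le> real n" for y
  proof (induction n arbitrary: y)
    case (Suc n)
    then obtain z where "(adj w ^^ n) x z" "adj w z y" by (blast elim: relpowp_Suc_E)
    with Suc.IH grad_sup_le_1_adj[OF mg lip, of y z] adj_sym[OF mg] show ?case by fastforce
  qed simp
  then show ?thesis using gdist_enatD[OF assms(3)] .
qed

lemma laplacian_eq_plan_sum:
  assumes mg: "measured_graph w m" and lf: "locally_finite w"
    and marg: "\<And>x. x \<in> sphere1 w a \<Longrightarrow> (\<Sum>y\<in>Y. \<rho> x y) = qw w m a x"
  shows "laplacian w m f a = (\<Sum>x\<in>ball1 w a. \<Sum>y\<in>Y. \<rho> x y * (f x - f a))"
proof -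
  have "laplacian w m f a = (\<Sum>x\<in>sphere1 w a. qw w m a x * (f x - f a))"
    by (simp add: laplacian_def sphere1_eq[OF mg])
  also have "\<dots> = (\<Sum>x\<in>sphere1 w a. \<Sum>y\<in>Y. \<rho> x y * (f x - f a))"
    by (intro sum.cong refl) (simp add: marg[symmetric] sum_distrib_right)
  also have "\<dots> = (\<Sum>x\<in>ball1 w a. \<Sum>y\<in>Y. \<rho> x y * (f x - f a))"
    by (simp add: ball1_eq_insert_sphere1 finite_sphere1[OF mg lf])
  finally show ?thesis .
qed

lemma compact_Pi_UNIV:
  assumes "\<And>i. compact (S i)"
  shows "compact (Pi UNIV S :: ('b \<Rightarrow> 'c::topological_space) set)"
proof -
  have "compactin (product_topology (\<lambda>i. euclidean) UNIV) (Pi\<^sub>E UNIV S)"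
    using assms by (simp add: compactin_PiE)
  then show ?thesis by (simp add: euclidean_product_topology PiE_UNIV_domain)
qed

lemma continuous_on_apply2 [continuous_intros]:
  "continuous_on S (\<lambda>\<rho>::'a \<Rightarrow> 'b \<Rightarrow> 'c::topological_space. \<rho> a b)"
proof -
  have "continuous_on UNIV ((\<lambda>g::'b \<Rightarrow> 'c. g b) \<circ> (\<lambda>\<rho>::'a \<Rightarrow> 'b \<Rightarrow> 'c. \<rho> a))"
    by (intro continuous_on_compose continuous_on_subset[OF continuous_on_product_coordinates])
      auto
  then show ?thesis by (auto simp: o_def intro: continuous_on_subset)
qed

lemma plan_value_add:
  "plan_value w x0 y0 (\<lambda>x y. \<rho> x y + \<sigma> x y) = plan_value w x0 y0 \<rho> + plan_value w x0 y0 \<sigma>"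
  by (simp add: plan_value_def distrib_right sum.distrib)

lemma plan_value_diff:
  "plan_value w x0 y0 (\<lambda>x y. \<rho> x y - \<sigma> x y) = plan_value w x0 y0 \<rho> - plan_value w x0 y0 \<sigma>"
  by (simp add: plan_value_def left_diff_distrib sum_subtractf)

definition single_row :: "'a \<Rightarrow> 'a set \<Rightarrow> ('a \<Rightarrow> real) \<Rightarrow> 'a \<Rightarrow> 'a \<Rightarrow> real" where
  "single_row a Y g x y = (if x = a \<and> y \<in> Y then g y else 0)"

lemma sum_single_row_right:
  "finite Z \<Longrightarrow> Y \<subseteq> Z \<Longrightarrow> (\<Sum>y\<in>Z. single_row a Y g x y) = (if x = a then sum g Y else 0)"
  by (simp add: single_row_def sum.inter_restrict[symmetric] Int_absorb1)

lemma sum_single_row_left: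
  "finite Z \<Longrightarrow> a \<in> Z \<Longrightarrow> (\<Sum>x\<in>Z. single_row a Y g x y) = (if y \<in> Y then g y else 0)"
  by (simp add: single_row_def sum.delta')

locale geodesic_pair =
  fixes w :: "'a \<Rightarrow> 'a \<Rightarrow> real" and m :: "'a \<Rightarrow> real" and x0 y0 :: 'a and d0 :: nat
  assumes graph: "measured_graph w m" and loc_fin: "locally_finite w"
    and dist_x0_y0: "gdist w x0 y0 = enat d0" and d0_pos: "0 < d0"
begin

lemma finite_balls: "finite (ball1 w x0)" "finite (ball1 w y0)"
  and finite_spheres: "finite (sphere1 w x0)" "finite (sphere1 w y0)"
  by (simp_all add: finite_ball1[OF graph loc_fin] finite_sphere1[OF graph loc_fin])

lemma centres_in_balls: "x0 \<in> ball1 w x0" "y0 \<in> ball1 w y0"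
  by (simp_all add: ball1_eq_insert_sphere1)

lemma transport_plan_nonneg:
  "transport_plan w m x0 y0 \<rho> \<Longrightarrow> x \<in> ball1 w x0 \<Longrightarrow> y \<in> ball1 w y0 \<Longrightarrow> 0 \<le> \<rho> x y"
  by (simp add: transport_plan_def)

definition cost :: "'a \<Rightarrow> 'a \<Rightarrow> real" where
  "cost x y = 1 - real (the_enat (gdist w x y)) / real d0"

lemma plan_value_eq_cost:
  "plan_value w x0 y0 \<rho> = (\<Sum>p\<in>ball1 w x0 \<times> ball1 w y0. \<rho> (fst p) (snd p) * cost (fst p) (snd p))"
  by (simp add: plan_value_def cost_def dist_x0_y0)

lemma scaled_plan_value:
  "real d0 * plan_value w x0 y0 \<rho> = (\<Sum>p\<in>ball1 w x0 \<times> ball1 w y0.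
     \<rho> (fst p) (snd p) * (real d0 - real (the_enat (gdist w (fst p) (snd p)))))"
  unfolding plan_value_eq_cost cost_def sum_distrib_left
  using d0_pos by (intro sum.cong) (auto simp: field_simps)

lemma plan_value_single_row:
  assumes "a \<in> ball1 w x0" "Y \<subseteq> ball1 w y0"
  shows "plan_value w x0 y0 (single_row a Y g) = (\<Sum>y\<in>Y. g y * cost a y)"
proof -
  have "plan_value w x0 y0 (single_row a Y g)
      = (\<Sum>x\<in>ball1 w x0. \<Sum>y\<in>ball1 w y0. single_row a Y (\<lambda>y. g y * cost a y) x y)"
    unfolding plan_value_eq_cost sum.cartesian_product
    by (intro sum.cong) (auto simp: single_row_def)
  also have "\<dots> = (\<Sum>y\<in>Y. g y * cost a y)"
    using assms finite_balls by (simp add: sum_single_row_right sum.delta')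
  finally show ?thesis .
qed

lemma plan_value_le_grad_laplacian:
  assumes plan: "transport_plan w m x0 y0 \<rho>"
    and fy: "grad w f y0 x0 = 1" and lip: "grad_sup w f \<le> 1"
  shows "plan_value w x0 y0 \<rho> \<le> grad w (laplacian w m f) x0 y0"
proof -
  have lap_x0: "laplacian w m f x0 = (\<Sum>x\<in>ball1 w x0. \<Sum>y\<in>ball1 w y0. \<rho> x y * (f x - f x0))"
    using plan by (intro laplacian_eq_plan_sum[OF graph loc_fin]) (auto simp: transport_plan_def)
  have "laplacian w m f y0 = (\<Sum>y\<in>ball1 w y0. \<Sum>x\<in>ball1 w x0. \<rho> x y * (f y - f y0))"
    using plan by (intro laplacian_eq_plan_sum[OF graph loc_fin]) (auto simp: transport_plan_def)
  also have "\<dots> = (\<Sum>x\<in>ball1 w x0. \<Sum>y\<in>ball1 w y0. \<rho> x y * (f y - f y0))"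
    by (rule sum.swap)
  finally have lap_y0: "laplacian w m f y0 = \<dots>" .
  have f_x0_y0: "f y0 - f x0 = real d0"
    using fy gdist_sym[OF graph, of y0 x0] dist_x0_y0 d0_pos by (simp add: grad_def)
  have "real d0 * plan_value w x0 y0 \<rho> = (\<Sum>p\<in>ball1 w x0 \<times> ball1 w y0.
     \<rho> (fst p) (snd p) * (real d0 - real (the_enat (gdist w (fst p) (snd p)))))"
    by (rule scaled_plan_value)
  also have "\<dots> \<le> (\<Sum>p\<in>ball1 w x0 \<times> ball1 w y0.
     \<rho> (fst p) (snd p) * ((f (fst p) - f x0) - (f (snd p) - f y0)))"
  proof (rule sum_mono)
    fix p assume "p \<in> ball1 w x0 \<times> ball1 w y0"
    then obtain x y where p: "p = (x, y)" "x \<in> ball1 w x0" "y \<in> ball1 w y0" by auto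
    then obtain n where "gdist w x y = enat n"
      using gdist_ball1_ball1[OF graph dist_x0_y0] by blast
    then have "f y - f x \<le> real (the_enat (gdist w x y))"
      using grad_sup_le_1_gdist[OF graph lip] by simp
    moreover have "0 \<le> \<rho> x y" using transport_plan_nonneg[OF plan p(2,3)] .
    ultimately show "\<rho> (fst p) (snd p) * (real d0 - real (the_enat (gdist w (fst p) (snd p))))
        \<le> \<rho> (fst p) (snd p) * ((f (fst p) - f x0) - (f (snd p) - f y0))"
      using f_x0_y0 p(1) by (auto intro: mult_left_mono)
  qed
  also have "\<dots> = laplacian w m f x0 - laplacian w m f y0"
    unfolding lap_x0 lap_y0 sum.cartesian_product
    by (simp add: split_beta sum_subtractf[symmetric] right_diff_distrib[symmetric])
  finally have "real d0 * plan_value w x0 y0 \<rho> \<le> real d0 * grad w (laplacian w m f) x0 y0"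
    using d0_pos by (simp add: grad_def dist_x0_y0)
  then show ?thesis using d0_pos by simp
qed

lemma plan_value_le_ollivier:
  assumes "transport_plan w m x0 y0 \<rho>"
  shows "ereal (plan_value w x0 y0 \<rho>) \<le> ollivier w m x0 y0"
  unfolding ollivier_def
  using plan_value_le_grad_laplacian[OF assms] by (auto intro!: Inf_greatest)

definition mass_bound :: real where
  "mass_bound = (\<Sum>x\<in>sphere1 w x0. qw w m x0 x) + (\<Sum>y\<in>sphere1 w y0. qw w m y0 y)"

lemma qw_le_mass_bound:
  "x \<in> sphere1 w x0 \<Longrightarrow> qw w m x0 x \<le> mass_bound"
  "y \<in> sphere1 w y0 \<Longrightarrow> qw w m y0 y \<le> mass_bound"
  unfolding mass_bound_def using finite_spheres qw_nonneg[OF graph]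
  by (intro add_increasing2 add_increasing sum_nonneg member_le_sum; simp)+

lemma transport_plan_le_mass_bound:
  assumes plan: "transport_plan w m x0 y0 \<rho>"
    and x: "x \<in> ball1 w x0" and y: "y \<in> ball1 w y0" and "(x, y) \<noteq> (x0, y0)"
  shows "\<rho> x y \<le> mass_bound"
proof (cases "x = x0")
  case False
  then have "x \<in> sphere1 w x0" using x by (simp add: ball1_eq_insert_sphere1)
  have "\<rho> x y \<le> (\<Sum>y'\<in>ball1 w y0. \<rho> x y')"
    using finite_balls y transport_plan_nonneg[OF plan x] by (intro member_le_sum) auto
  also have "\<dots> = qw w m x0 x" using plan \<open>x \<in> sphere1 w x0\<close> by (simp add: transport_plan_def)
  finally show ?thesis using qw_le_mass_bound(1)[OF \<open>x \<in> sphere1 w x0\<close>] by simp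
next
  case True
  then have "y \<in> sphere1 w y0" using y assms(4) by (simp add: ball1_eq_insert_sphere1)
  have "\<rho> x y \<le> (\<Sum>x'\<in>ball1 w x0. \<rho> x' y)"
    using finite_balls x transport_plan_nonneg[OF plan _ y] by (intro member_le_sum) auto
  also have "\<dots> = qw w m y0 y" using plan \<open>y \<in> sphere1 w y0\<close> by (simp add: transport_plan_def)
  finally show ?thesis using qw_le_mass_bound(2)[OF \<open>y \<in> sphere1 w y0\<close>] by simp
qed

text \<open>The entry at (x0, y0) is unconstrained and has cost 0, so it may be set to 0; this makes
  the plans that matter range over a compact set.\<close>

definition reduced_plans :: "('a \<Rightarrow> 'a \<Rightarrow> real) set" where
  "reduced_plans = {\<rho>. transport_plan w m x0 y0 \<rho> \<and>
     (\<forall>x y. (x, y) \<notin> ball1 w x0 \<times> ball1 w y0 - {(x0, y0)} \<longrightarrow> \<rho> x y = 0)}"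

lemma compact_reduced_plans: "compact reduced_plans"
proof -
  define box where "box = Pi UNIV (\<lambda>x. Pi UNIV (\<lambda>y.
    if (x, y) \<in> ball1 w x0 \<times> ball1 w y0 - {(x0, y0)} then {0..mass_bound} else {0}))"
  have "compact box" unfolding box_def by (intro compact_Pi_UNIV) auto
  moreover have "closed reduced_plans"
    unfolding reduced_plans_def transport_plan_def Ball_def
    by (intro closed_Collect_conj closed_Collect_all closed_Collect_imp open_Collect_const
        closed_Collect_le closed_Collect_eq continuous_intros)
  moreover have "reduced_plans \<subseteq> box"
    unfolding reduced_plans_def box_def
    using transport_plan_le_mass_bound transport_plan_nonneg by fastforce
  ultimately show ?thesis by (metis compact_Int_closed inf.absorb2)
qed

lemma reduced_plans_nonempty: "reduced_plans \<noteq> {}"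
proof -
  define \<rho> where "\<rho> x y = (if y = y0 \<and> x \<in> sphere1 w x0 then qw w m x0 x
    else if x = x0 \<and> y \<in> sphere1 w y0 then qw w m y0 y else 0)" for x y
  have "(\<Sum>y\<in>ball1 w y0. \<rho> x y) = qw w m x0 x" if "x \<in> sphere1 w x0" for x
  proof -
    have "(\<Sum>y\<in>ball1 w y0. \<rho> x y) = (\<Sum>y\<in>ball1 w y0. if y = y0 then qw w m x0 x else 0)"
      using that by (intro sum.cong) (auto simp: \<rho>_def)
    then show ?thesis using finite_balls centres_in_balls by simp
  qed
  moreover have "(\<Sum>x\<in>ball1 w x0. \<rho> x y) = qw w m y0 y" if "y \<in> sphere1 w y0" for y
  proof -
    have "(\<Sum>x\<in>ball1 w x0. \<rho> x y) = (\<Sum>x\<in>ball1 w x0. if x = x0 then qw w m y0 y else 0)"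
      using that by (intro sum.cong) (auto simp: \<rho>_def)
    then show ?thesis using finite_balls centres_in_balls by simp
  qed
  ultimately have "\<rho> \<in> reduced_plans"
    unfolding reduced_plans_def transport_plan_def
    using qw_nonneg[OF graph] by (auto simp: \<rho>_def ball1_eq_insert_sphere1)
  then show ?thesis by blast
qed

lemma reduce_transport_plan:
  assumes plan: "transport_plan w m x0 y0 \<sigma>"
  shows "\<exists>\<rho>\<in>reduced_plans. plan_value w x0 y0 \<rho> = plan_value w x0 y0 \<sigma>"
proof -
  define \<rho> where "\<rho> x y = (if (x, y) \<in> ball1 w x0 \<times> ball1 w y0 - {(x0, y0)} then \<sigma> x y else 0)"
    for x y
  have rows: "(\<Sum>y\<in>ball1 w y0. \<rho> x y) = (\<Sum>y\<in>ball1 w y0. \<sigma> x y)" if "x \<in> sphere1 w x0" for x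
    using that by (intro sum.cong) (auto simp: \<rho>_def ball1_eq_insert_sphere1)
  have cols: "(\<Sum>x\<in>ball1 w x0. \<rho> x y) = (\<Sum>x\<in>ball1 w x0. \<sigma> x y)" if "y \<in> sphere1 w y0" for y
    using that by (intro sum.cong) (auto simp: \<rho>_def ball1_eq_insert_sphere1)
  have "\<rho> \<in> reduced_plans"
    using plan rows cols unfolding reduced_plans_def transport_plan_def by (auto simp: \<rho>_def)
  moreover have "plan_value w x0 y0 \<rho> = plan_value w x0 y0 \<sigma>"
    unfolding plan_value_eq_cost using d0_pos
    by (intro sum.cong) (auto simp: \<rho>_def cost_def dist_x0_y0)
  ultimately show ?thesis by blast
qed

lemma exists_optimal_plan: "\<exists>\<rho>. optimal_plan w m x0 y0 \<rho>"
proof -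
  have "continuous_on reduced_plans (plan_value w x0 y0)"
    unfolding plan_value_def by (intro continuous_intros)
  then obtain \<rho> where \<rho>: "\<rho> \<in> reduced_plans"
    and max: "\<And>\<sigma>. \<sigma> \<in> reduced_plans \<Longrightarrow> plan_value w x0 y0 \<sigma> \<le> plan_value w x0 y0 \<rho>"
    using continuous_attains_sup[OF compact_reduced_plans reduced_plans_nonempty] by blast
  have "plan_value w x0 y0 \<sigma> \<le> plan_value w x0 y0 \<rho>" if "transport_plan w m x0 y0 \<sigma>" for \<sigma>
    using reduce_transport_plan[OF that] max by force
  with \<rho> show ?thesis unfolding optimal_plan_def reduced_plans_def by blast
qed

definition reroute :: "('a \<Rightarrow> 'a \<Rightarrow> real) \<Rightarrow> 'a \<Rightarrow> 'a \<Rightarrow> 'a \<Rightarrow> real" where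
  "reroute \<sigma> x1 x y = \<sigma> x y
     + single_row x1 {y0} (\<lambda>_. \<Sum>z\<in>sphere1 w y0. \<sigma> x1 z) x y
     + single_row x0 (sphere1 w y0) (\<sigma> x1) x y
     - single_row x1 (sphere1 w y0) (\<sigma> x1) x y"

lemma transport_plan_reroute:
  assumes plan: "transport_plan w m x0 y0 \<sigma>" and x1: "x1 \<in> sphere1 w x0"
  shows "transport_plan w m x0 y0 (reroute \<sigma> x1)"
proof -
  have x1_ball: "x1 \<in> ball1 w x0" and "x1 \<noteq> x0"
    using x1 by (auto simp: ball1_eq_insert_sphere1)
  have sphere_sub: "{y0} \<subseteq> ball1 w y0" "sphere1 w y0 \<subseteq> ball1 w y0"
    by (auto simp: ball1_eq_insert_sphere1)
  have nn: "0 \<le> \<sigma> x y" if "x \<in> ball1 w x0" "y \<in> ball1 w y0" for x y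
    using transport_plan_nonneg[OF plan that] .
  have "0 \<le> (\<Sum>z\<in>sphere1 w y0. \<sigma> x1 z)"
    using nn[OF x1_ball] sphere_sub by (auto intro: sum_nonneg)
  then have "0 \<le> reroute \<sigma> x1 x y" if "x \<in> ball1 w x0" "y \<in> ball1 w y0" for x y
    using that nn[OF x1_ball] nn \<open>x1 \<noteq> x0\<close> sphere_sub
    by (auto simp: reroute_def single_row_def)
  moreover have "(\<Sum>y\<in>ball1 w y0. reroute \<sigma> x1 x y) = qw w m x0 x" if "x \<in> sphere1 w x0" for x
    using that plan finite_balls sphere_sub
    by (auto simp: reroute_def sum.distrib sum_subtractf sum_single_row_right transport_plan_def)
  moreover have "(\<Sum>x\<in>ball1 w x0. reroute \<sigma> x1 x y) = qw w m y0 y" if "y \<in> sphere1 w y0" for y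
    using that plan finite_balls x1_ball centres_in_balls
    by (auto simp: reroute_def sum.distrib sum_subtractf sum_single_row_left transport_plan_def)
  ultimately show ?thesis by (simp add: transport_plan_def)
qed

lemma reroute_at:
  assumes plan: "transport_plan w m x0 y0 \<sigma>" and x1: "x1 \<in> sphere1 w x0"
  shows "reroute \<sigma> x1 x1 y0 = qw w m x0 x1"
proof -
  have "x1 \<noteq> x0" using x1 by auto
  then have "reroute \<sigma> x1 x1 y0 = (\<Sum>y\<in>insert y0 (sphere1 w y0). \<sigma> x1 y)"
    using finite_spheres by (simp add: reroute_def single_row_def)
  also have "\<dots> = qw w m x0 x1"
    using plan x1 by (simp add: transport_plan_def ball1_eq_insert_sphere1)
  finally show ?thesis .
qed

lemma plan_value_reroute:
  assumes x1: "x1 \<in> sphere1 w x0"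
  shows "plan_value w x0 y0 (reroute \<sigma> x1) = plan_value w x0 y0 \<sigma>
    + (\<Sum>y\<in>sphere1 w y0. \<sigma> x1 y * (cost x1 y0 + cost x0 y - cost x1 y))"
proof -
  have balls: "x1 \<in> ball1 w x0" "{y0} \<subseteq> ball1 w y0" "sphere1 w y0 \<subseteq> ball1 w y0"
    using x1 by (auto simp: ball1_eq_insert_sphere1)
  have "reroute \<sigma> x1 = (\<lambda>x y. \<sigma> x y
     + single_row x1 {y0} (\<lambda>_. \<Sum>z\<in>sphere1 w y0. \<sigma> x1 z) x y
     + single_row x0 (sphere1 w y0) (\<sigma> x1) x y
     - single_row x1 (sphere1 w y0) (\<sigma> x1) x y)"
    by (simp add: fun_eq_iff reroute_def)
  then show ?thesis
    using balls centres_in_balls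
    by (simp add: plan_value_add plan_value_diff plan_value_single_row sum.distrib sum_subtractf
        sum_distrib_right distrib_left right_diff_distrib)
qed

lemma plan_value_reroute_ge:
  assumes plan: "transport_plan w m x0 y0 \<sigma>" and x1: "x1 \<in> sphere1 w x0"
    and d1: "gdist w x1 y0 \<le> enat (d0 - 1)"
  shows "plan_value w x0 y0 \<sigma> \<le> plan_value w x0 y0 (reroute \<sigma> x1)"
proof -
  have "0 \<le> \<sigma> x1 y * (cost x1 y0 + cost x0 y - cost x1 y)" if y: "y \<in> sphere1 w y0" for y
  proof (rule mult_nonneg_nonneg)
    have x1_ball: "x1 \<in> ball1 w x0" and y_ball: "y \<in> ball1 w y0"
      using x1 y by (auto simp: ball1_eq_insert_sphere1)
    then show "0 \<le> \<sigma> x1 y" by (rule transport_plan_nonneg[OF plan])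
    obtain n where n: "gdist w x1 y = enat n"
      using gdist_ball1_ball1[OF graph dist_x0_y0 x1_ball y_ball] by blast
    obtain n' where n': "gdist w x0 y = enat n'"
      using gdist_ball1_ball1[OF graph dist_x0_y0 centres_in_balls(1) y_ball] by blast
    obtain d1 where d1': "gdist w x1 y0 = enat d1" "d1 \<le> d0 - 1"
      using d1 by (cases "gdist w x1 y0") auto
    have "gdist w x0 x1 = enat 1" using x1 by (simp add: sphere1_def one_enat_def)
    from gdist_triangle[OF this n] n' have "n' \<le> 1 + n" by simp
    then have "0 \<le> (real d0 - real d1 - real n' + real n) / real d0" using d1'(2) d0_pos by simp
    also have "\<dots> = cost x1 y0 + cost x0 y - cost x1 y"
      using n n' d1' d0_pos by (simp add: cost_def field_simps)
    finally show "0 \<le> cost x1 y0 + cost x0 y - cost x1 y" .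
  qed
  then show ?thesis by (simp add: plan_value_reroute[OF x1] sum_nonneg)
qed

lemma exists_optimal_plan_through:
  assumes x1: "x1 \<in> sphere1 w x0" and d1: "gdist w x1 y0 \<le> enat (d0 - 1)"
  shows "\<exists>\<rho>. optimal_plan w m x0 y0 \<rho> \<and> \<rho> x1 y0 = qw w m x0 x1"
proof -
  obtain \<sigma> where opt: "optimal_plan w m x0 y0 \<sigma>" using exists_optimal_plan by blast
  then have plan: "transport_plan w m x0 y0 \<sigma>" by (simp add: optimal_plan_def)
  have "optimal_plan w m x0 y0 (reroute \<sigma> x1)"
    using opt transport_plan_reroute[OF plan x1] plan_value_reroute_ge[OF plan x1 d1]
    unfolding optimal_plan_def by (meson order_trans)
  with reroute_at[OF plan x1] show ?thesis by blast
qed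

text \<open>Every pair in the two balls is at distance at most d0 + 2, so pairs farther apart than
  x0 and y0 lower the scaled value by at most twice their mass.\<close>

lemma far_mass_bound:
  assumes plan: "transport_plan w m x0 y0 \<rho>"
    and x1: "x1 \<in> ball1 w x0" and d1: "gdist w x1 y0 \<le> enat (d0 - 1)"
  shows "\<rho> x1 y0 - 2 * (\<Sum>p\<in>{p\<in>ball1 w x0 \<times> ball1 w y0. gdist w (fst p) (snd p) > gdist w x0 y0}.
      \<rho> (fst p) (snd p)) \<le> real d0 * plan_value w x0 y0 \<rho>"
proof -
  define B where "B = ball1 w x0 \<times> ball1 w y0"
  define far where "far p \<longleftrightarrow> gdist w (fst p) (snd p) > gdist w x0 y0" for p
  define D where "D p = real (the_enat (gdist w (fst p) (snd p)))" for p
  have "(x1, y0) \<in> B" using x1 centres_in_balls by (simp add: B_def)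
  have bound: "(if p = (x1, y0) then \<rho> (fst p) (snd p) else 0)
      - 2 * (if far p then \<rho> (fst p) (snd p) else 0) \<le> \<rho> (fst p) (snd p) * (real d0 - D p)"
    if "p \<in> B" for p
  proof -
    obtain n where n: "gdist w (fst p) (snd p) = enat n" "n \<le> d0 + 2"
      using \<open>p \<in> B\<close> gdist_ball1_ball1[OF graph dist_x0_y0] by (force simp: B_def)
    have "0 \<le> \<rho> (fst p) (snd p)" using \<open>p \<in> B\<close> transport_plan_nonneg[OF plan] by (auto simp: B_def)
    moreover have "p = (x1, y0) \<Longrightarrow> n + 1 \<le> d0" using n d1 d0_pos by auto
    moreover have "far p \<longleftrightarrow> d0 < n" using n by (simp add: far_def dist_x0_y0)
    ultimately show ?thesis
      using n mult_left_mono[of 1 "real d0 - real n" "\<rho> (fst p) (snd p)"]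
        mult_left_mono[of "-2" "real d0 - real n" "\<rho> (fst p) (snd p)"]
      by (auto simp: D_def)
  qed
  have "\<rho> x1 y0 - 2 * (\<Sum>p\<in>{p\<in>B. far p}. \<rho> (fst p) (snd p))
      = (\<Sum>p\<in>B. (if p = (x1, y0) then \<rho> (fst p) (snd p) else 0)
          - 2 * (if far p then \<rho> (fst p) (snd p) else 0))"
    using \<open>(x1, y0) \<in> B\<close> finite_balls
    by (simp add: B_def sum_subtractf sum_distrib_left sum.inter_filter)
  also have "\<dots> \<le> (\<Sum>p\<in>B. \<rho> (fst p) (snd p) * (real d0 - D p))" using bound by (rule sum_mono)
  also have "\<dots> = real d0 * plan_value w x0 y0 \<rho>"
    by (simp add: scaled_plan_value B_def D_def)
  finally show ?thesis by (simp add: B_def far_def)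
qed

end

theorem lemma2p2:
  fixes w :: "'a::countable \<Rightarrow> 'a \<Rightarrow> real" and m :: "'a \<Rightarrow> real"
    and x0 y0 :: 'a and \<epsilon> :: real
  assumes "measured_graph w m" and "locally_finite w"
    and "x0 \<noteq> y0" and "gdist w x0 y0 < \<infinity>"
    and "\<epsilon> > 0"
    and "ereal (real (the_enat (gdist w x0 y0))) * ollivier w m x0 y0 \<le> ereal \<epsilon>"
  shows "\<exists>\<rho>. optimal_plan w m x0 y0 \<rho> \<and>
    (\<Sum>p\<in>{p\<in>ball1 w x0 \<times> ball1 w y0. gdist w (fst p) (snd p) > gdist w x0 y0}.
        \<rho> (fst p) (snd p)) \<ge> (qmin w m - \<epsilon>) / 2"
proof -
  obtain d0 where d0: "gdist w x0 y0 = enat d0" using assms(4) by (cases "gdist w x0 y0") auto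
  have "0 < d0" using assms(3) d0 gdist_eq_0_iff[of w x0 y0] by (auto simp: zero_enat_def)
  interpret geodesic_pair w m x0 y0 d0 using assms(1,2) d0 \<open>0 < d0\<close> by unfold_locales
  obtain x1 where x1: "adj w x0 x1" and d1: "gdist w x1 y0 \<le> enat (d0 - 1)"
    using exists_geodesic_neighbour[OF d0 \<open>0 < d0\<close>] by blast
  have x1_sphere: "x1 \<in> sphere1 w x0" using x1 sphere1_eq[OF graph] by simp
  then obtain \<rho> where opt: "optimal_plan w m x0 y0 \<rho>" and "\<rho> x1 y0 = qw w m x0 x1"
    using exists_optimal_plan_through d1 by blast
  have plan: "transport_plan w m x0 y0 \<rho>" using opt by (simp add: optimal_plan_def)
  have "ereal (real d0) * ereal (plan_value w x0 y0 \<rho>) \<le> ereal (real d0) * ollivier w m x0 y0"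
    using plan_value_le_ollivier[OF plan] by (rule ereal_mult_left_mono) simp
  also have "\<dots> \<le> ereal \<epsilon>" using assms(6) d0 by simp
  finally have "real d0 * plan_value w x0 y0 \<rho> \<le> \<epsilon>" by simp
  moreover have "qmin w m \<le> \<rho> x1 y0"
    using qmin_le_qw[OF graph x1] \<open>\<rho> x1 y0 = qw w m x0 x1\<close> by simp
  moreover note far_mass_bound[OF plan _ d1] x1_sphere
  ultimately show ?thesis using opt by (force simp: ball1_eq_insert_sphere1)
qed

end
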